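(* Let $G$ be a locally finite graph with graph metric $d$, $h$ an even positive integer and $R$ a positive integer. Let $S_1\subseteq V(G)$ be such that distinct elements of $S_1$ are at $d$-distance greater than $h$ and every vertex is at $d$-distance at most $h$ from $S_1$; let $\ell_1:S_1\to[0,1/2]$ be injective, let $\mathcal V_1(v)$ be the unique $s\in S_1$ minimizing $d(v,s)+\ell_1(s)$, and $V_{1,s}=\{v:\mathcal V_1(v)=s\}$. Let $\Gamma$ be the graph on vertex set $S_1$ in which distinct $s,s'$ are adjacent iff some edge of $G$ joins $V_{1,s}$ and $V_{1,s'}$, with graph metric $d_\Gamma$. Let $S_2\subseteq S_1$ be such that distinct elements of $S_2$ are at $d_\Gamma$-distance greater than $R$ and every element of $S_1$ is at $d_\Gamma$-distance at most $R$ from $S_2$; let $\ell_2:S_2\to[0,1/2]$ be injective, and for $s'\in S_1$ let $\mathcal V_2(s')$ be the unique $s\in S_2$ minimizing $d_\Gamma(s',s)+\ell_2(s)$. For $s\in S_2$ set $V_{2,s}=\{v\in V(G):\mathcal V_2(\mathcal V_1(v))=s\}$. Then for every $s\in S_2$, the induced subgraph $G[V_{2,s}]$ is connected and contains every vertex at $d$-distance at most $\lfloor R/2\rfloor-h$ from $s$. *)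

theory Defs
  imports Complex_Main "HOL-Library.Extended_Real"
begin

text \<open>Graphs are given by a vertex set W and an edge relation E (restricted to W when used).\<close>

definition walk :: "'a set \<Rightarrow> ('a \<Rightarrow> 'a \<Rightarrow> bool) \<Rightarrow> 'a list \<Rightarrow> bool" where
  "walk W E xs \<longleftrightarrow> xs \<noteq> [] \<and> set xs \<subseteq> W \<and>
     (\<forall>i. Suc i < length xs \<longrightarrow> E (xs ! i) (xs ! Suc i))"

text \<open>Graph metric (infinite if no connecting walk).\<close>
definition gdist :: "'a set \<Rightarrow> ('a \<Rightarrow> 'a \<Rightarrow> bool) \<Rightarrow> 'a \<Rightarrow> 'a \<Rightarrow> enat" where
  "gdist W E u v = (INF xs \<in> {xs. walk W E xs \<and> hd xs = u \<and> last xs = v}. enat (length xs - 1))"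

definition simple_graph :: "'a set \<Rightarrow> ('a \<Rightarrow> 'a \<Rightarrow> bool) \<Rightarrow> bool" where
  "simple_graph W E \<longleftrightarrow> (\<forall>u v. E u v \<longrightarrow> u \<in> W \<and> v \<in> W \<and> u \<noteq> v \<and> E v u)"

definition locally_finite :: "'a set \<Rightarrow> ('a \<Rightarrow> 'a \<Rightarrow> bool) \<Rightarrow> bool" where
  "locally_finite W E \<longleftrightarrow> (\<forall>v\<in>W. finite {u. E v u})"

definition induced_connected :: "('a \<Rightarrow> 'a \<Rightarrow> bool) \<Rightarrow> 'a set \<Rightarrow> bool" where
  "induced_connected E U \<longleftrightarrow> U \<noteq> {} \<and>
     (\<forall>u\<in>U. \<forall>v\<in>U. \<exists>xs. walk U E xs \<and> hd xs = u \<and> last xs = v)"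

definition vcenter :: "'a set \<Rightarrow> ('a \<Rightarrow> 'a \<Rightarrow> bool) \<Rightarrow> 'a set \<Rightarrow> ('a \<Rightarrow> real) \<Rightarrow> 'a \<Rightarrow> 'a" where
  "vcenter W E S l v = (THE s. s \<in> S \<and>
     (\<forall>t\<in>S. ereal_of_enat (gdist W E v s) + ereal (l s) \<le> ereal_of_enat (gdist W E v t) + ereal (l t)))"

definition cell_graph :: "'a set \<Rightarrow> ('a \<Rightarrow> 'a \<Rightarrow> bool) \<Rightarrow> ('a \<Rightarrow> 'a) \<Rightarrow> 'a set \<Rightarrow> 'a \<Rightarrow> 'a \<Rightarrow> bool" where
  "cell_graph W E f S s s' \<longleftrightarrow> s \<in> S \<and> s' \<in> S \<and> s \<noteq> s' \<and>
     (\<exists>u v. u \<in> W \<and> v \<in> W \<and> E u v \<and> f u = s \<and> f v = s')"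

end

theory Submission
  imports Defs
begin

text \<open>
  Cells of a weighted Voronoi partition are star-shaped: every vertex on a geodesic from \<open>v\<close> to
  its centre \<open>s\<close> is strictly closer to \<open>s\<close> and no closer to any other site, and since distances
  are integers, weights in \<open>[0, 1/2]\<close> only break ties between equidistant sites. So the
  first-level cells are connected, and a walk in the cell graph \<open>\<Gamma>\<close> inside a second-level
  cell lifts, cell by cell, to a walk in \<open>G\<close>; hence the second-level cells are connected.

  For the ball, \<open>v \<mapsto> V\<^sub>1(v)\<close> does not increase distances and fixes the sites, so
  \<open>d(v, s) = k\<close> with \<open>2k \<le> R\<close> gives \<open>d\<^sub>\<Gamma>(V\<^sub>1(v), s) \<le> k\<close>, while by separation every other site
  of \<open>S\<^sub>2\<close> is at \<open>d\<^sub>\<Gamma>\<close>-distance \<open>> R - k \<ge> k\<close>.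
\<close>

lemma walk_Cons:
  "walk W E (x # xs) \<longleftrightarrow> x \<in> W \<and> (xs = [] \<or> walk W E xs \<and> E x (hd xs))"
proof (cases xs)
  case (Cons y ys)
  have "(\<forall>i. Suc i < length (x # xs) \<longrightarrow> E ((x # xs) ! i) ((x # xs) ! Suc i)) \<longleftrightarrow>
        E x y \<and> (\<forall>i. Suc i < length xs \<longrightarrow> E (xs ! i) (xs ! Suc i))"
    using Cons by (auto simp: less_Suc_eq_0_disj)
  then show ?thesis using Cons by (auto simp: walk_def)
qed (simp add: walk_def)

lemma walk_Nil [simp]: "\<not> walk W E []"
  by (simp add: walk_def)

lemma walk_singleton [simp]: "walk W E [x] \<longleftrightarrow> x \<in> W"
  by (simp add: walk_Cons)

lemma walk_append:
  "walk W E xs \<Longrightarrow> walk W E ys \<Longrightarrow> E (last xs) (hd ys) \<Longrightarrow> walk W E (xs @ ys)"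
proof (induction xs)
  case (Cons x xs)
  then show ?case by (cases "xs = []") (auto simp: walk_Cons)
qed simp

lemma walk_join:
  assumes "walk W E xs" "walk W E ys" "last xs = hd ys"
  shows "walk W E (xs @ tl ys)" "hd (xs @ tl ys) = hd xs" "last (xs @ tl ys) = last ys"
    and "length (xs @ tl ys) = length xs + length ys - 1"
proof -
  obtain y ys' where ys: "ys = y # ys'" using assms(2) by (cases ys) auto
  have "xs \<noteq> []" using assms(1) by auto
  then show "walk W E (xs @ tl ys)" "hd (xs @ tl ys) = hd xs" "last (xs @ tl ys) = last ys"
      "length (xs @ tl ys) = length xs + length ys - 1"
    using assms ys by (cases ys'; auto simp: walk_Cons intro: walk_append)+
qed

lemma walk_rev:
  assumes "symp E" and "walk W E xs"
  shows "walk W E (rev xs)"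
  using assms(2)
proof (induction xs)
  case (Cons x xs)
  then show ?case
    by (cases "xs = []") (auto simp: walk_Cons last_rev sympD[OF assms(1)] intro!: walk_append)
qed simp

lemma walk_mono: "walk U E xs \<Longrightarrow> U \<subseteq> U' \<Longrightarrow> walk U' E xs"
  by (auto simp: walk_def)

lemma walk_take: "walk W E xs \<Longrightarrow> 0 < n \<Longrightarrow> walk W E (take n xs)"
  unfolding walk_def by (auto dest: in_set_takeD)

lemma walk_drop: "walk W E xs \<Longrightarrow> n < length xs \<Longrightarrow> walk W E (drop n xs)"
  unfolding walk_def by (auto dest: in_set_dropD)

definition reachable :: "'a set \<Rightarrow> ('a \<Rightarrow> 'a \<Rightarrow> bool) \<Rightarrow> 'a \<Rightarrow> 'a \<Rightarrow> bool" where
  "reachable W E u v \<longleftrightarrow> (\<exists>xs. walk W E xs \<and> hd xs = u \<and> last xs = v)"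

lemma reachable_refl: "x \<in> W \<Longrightarrow> reachable W E x x"
  unfolding reachable_def by (intro exI[of _ "[x]"]) simp

lemma reachable_edge: "x \<in> W \<Longrightarrow> y \<in> W \<Longrightarrow> E x y \<Longrightarrow> reachable W E x y"
  unfolding reachable_def by (intro exI[of _ "[x, y]"]) (simp add: walk_Cons)

lemma reachable_trans: "reachable W E x y \<Longrightarrow> reachable W E y z \<Longrightarrow> reachable W E x z"
  unfolding reachable_def by (metis walk_join(1-3))

lemma reachable_sym:
  "symp E \<Longrightarrow> reachable W E x y \<Longrightarrow> reachable W E y x"
  unfolding reachable_def by (metis walk_rev hd_rev last_rev)

lemma reachable_mono: "reachable U E x y \<Longrightarrow> U \<subseteq> U' \<Longrightarrow> reachable U' E x y"
  unfolding reachable_def using walk_mono by metis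

lemma gdist_le_walk:
  "walk W E xs \<Longrightarrow> hd xs = u \<Longrightarrow> last xs = v \<Longrightarrow> gdist W E u v \<le> enat (length xs - 1)"
  unfolding gdist_def by (rule INF_lower) auto

lemma gdist_enatE:
  assumes "gdist W E u v = enat k"
  obtains xs where "walk W E xs" "hd xs = u" "last xs = v" "length xs = Suc k"
proof -
  let ?L = "(\<lambda>xs. enat (length xs - 1)) ` {xs. walk W E xs \<and> hd xs = u \<and> last xs = v}"
  have "?L \<noteq> {}"
  proof
    assume "?L = {}"
    then have no_walk: "{xs. walk W E xs \<and> hd xs = u \<and> last xs = v} = {}" by blast
    have "gdist W E u v = \<infinity>" unfolding gdist_def no_walk by (simp add: top_enat_def)
    then show False using assms by simp
  qed
  then have "Inf ?L \<in> ?L"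
    unfolding Inf_enat_def by (metis (no_types, lifting) LeastI_ex ex_in_conv)
  then obtain xs where "walk W E xs" "hd xs = u" "last xs = v" "length xs - 1 = k"
    using assms unfolding gdist_def by auto
  moreover from this have "xs \<noteq> []" by auto
  ultimately show ?thesis using that by auto
qed

lemma gdist_refl: "u \<in> W \<Longrightarrow> gdist W E u u = 0"
  using gdist_le_walk[of W E "[u]" u u] by (simp add: zero_enat_def[symmetric])

lemma gdist_eq_0_iff: "gdist W E u v = 0 \<longleftrightarrow> u \<in> W \<and> u = v"
proof
  assume "gdist W E u v = 0"
  then have "gdist W E u v = enat 0" by (simp add: zero_enat_def)
  then obtain xs where "walk W E xs" "hd xs = u" "last xs = v" "length xs = Suc 0"
    by (rule gdist_enatE)
  then show "u \<in> W \<and> u = v" by (cases xs) auto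
qed (auto simp: gdist_refl)

lemma gdist_edge_le: "u \<in> W \<Longrightarrow> v \<in> W \<Longrightarrow> E u v \<Longrightarrow> gdist W E u v \<le> 1"
  using gdist_le_walk[of W E "[u, v]" u v] by (simp add: walk_Cons one_enat_def)

lemma gdist_triangle: "gdist W E u w \<le> gdist W E u v + gdist W E v w"
proof (cases "gdist W E u v"; cases "gdist W E v w")
  fix a b assume ab: "gdist W E u v = enat a" "gdist W E v w = enat b"
  obtain xs where xs: "walk W E xs" "hd xs = u" "last xs = v" "length xs = Suc a"
    using ab(1) by (rule gdist_enatE)
  obtain ys where ys: "walk W E ys" "hd ys = v" "last ys = w" "length ys = Suc b"
    using ab(2) by (rule gdist_enatE)
  have "gdist W E u w \<le> enat (length (xs @ tl ys) - 1)"
    using walk_join[OF xs(1) ys(1)] xs ys by (intro gdist_le_walk) auto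
  also have "\<dots> = gdist W E u v + gdist W E v w"
    using walk_join(4)[OF xs(1) ys(1)] xs ys ab by simp
  finally show ?thesis .
qed auto

lemma gdist_sym:
  assumes "symp E"
  shows "gdist W E u v = gdist W E v u"
proof -
  have le: "gdist W E a b \<le> gdist W E b a" for a b
  proof (cases "gdist W E b a")
    case (enat k)
    then obtain xs where "walk W E xs" "hd xs = b" "last xs = a" "length xs = Suc k"
      by (rule gdist_enatE)
    moreover from this have "walk W E (rev xs)" using walk_rev[OF assms] by blast
    ultimately show ?thesis
      using gdist_le_walk[of W E "rev xs" a b] enat by (simp add: hd_rev last_rev)
  qed simp
  show ?thesis using le[of u v] le[of v u] by simp
qed

lemma gdist_hd_nth_le:
  assumes "walk W E xs" "i < length xs"
  shows "gdist W E (hd xs) (xs ! i) \<le> enat i"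
proof -
  have "last (take (Suc i) xs) = xs ! i" "hd (take (Suc i) xs) = hd xs"
    using assms(2) by (simp add: take_Suc_conv_app_nth, simp add: hd_take)
  then show ?thesis
    using gdist_le_walk[OF walk_take[OF assms(1)], of "Suc i"] assms(2) by simp
qed

lemma gdist_nth_last_le:
  assumes "walk W E xs" "i < length xs"
  shows "gdist W E (xs ! i) (last xs) \<le> enat (length xs - 1 - i)"
  using gdist_le_walk[OF walk_drop[OF assms]] assms by (simp add: hd_drop_conv_nth)

lemma finite_gdist_ball:
  assumes "locally_finite W E"
  shows "finite {u. gdist W E v u \<le> enat n}"
proof (induction n)
  case 0
  have "{u. gdist W E v u \<le> enat 0} \<subseteq> {v}"
    by (auto simp flip: zero_enat_def simp: gdist_eq_0_iff)
  then show ?case by (rule finite_subset) simp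
next
  case (Suc n)
  let ?B = "{u. gdist W E v u \<le> enat n}"
  have "{u. gdist W E v u \<le> enat (Suc n)} \<subseteq> ?B \<union> (\<Union>w\<in>?B \<inter> W. {u. E w u})"
  proof
    fix u assume "u \<in> {u. gdist W E v u \<le> enat (Suc n)}"
    then obtain k where k: "gdist W E v u = enat k" "k \<le> Suc n"
      by (cases "gdist W E v u") auto
    show "u \<in> ?B \<union> (\<Union>w\<in>?B \<inter> W. {u. E w u})"
    proof (cases "k \<le> n")
      case False
      obtain xs where xs: "walk W E xs" "hd xs = v" "last xs = u" "length xs = Suc (Suc n)"
        using k(1) False k(2) by (metis gdist_enatE le_SucE)
      \<comment> \<open>the second-to-last vertex of a geodesic to \<open>u\<close> lies in the smaller ball\<close>
      have "xs ! n \<in> ?B \<inter> W" "E (xs ! n) u"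
        using xs gdist_hd_nth_le[OF xs(1), of n] by (auto simp: walk_def last_conv_nth)
      then show ?thesis by blast
    qed (use k in auto)
  qed
  moreover have "finite (?B \<union> (\<Union>w\<in>?B \<inter> W. {u. E w u}))"
    using Suc assms by (auto simp: locally_finite_def)
  ultimately show ?case by (rule finite_subset)
qed

lemma le_of_weighted_le:
  fixes a b :: nat and x y :: real
  assumes "real a + x \<le> real b + y" "0 \<le> x" "y \<le> 1/2"
  shows "a \<le> b"
  using assms by linarith

lemma weighted_le_of_less:
  fixes a b :: nat and x y :: real
  assumes "a < b" "x \<le> 1/2" "0 \<le> y"
  shows "real a + x \<le> real b + y"
proof -
  have "real a + 1 \<le> real b" using assms(1) by linarith
  then show ?thesis using assms(2,3) by linarith
qed

definition is_vcenter ::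
    "'a set \<Rightarrow> ('a \<Rightarrow> 'a \<Rightarrow> bool) \<Rightarrow> 'a set \<Rightarrow> ('a \<Rightarrow> real) \<Rightarrow> 'a \<Rightarrow> 'a \<Rightarrow> nat \<Rightarrow> bool" where
  "is_vcenter W E S l v s c \<longleftrightarrow> s \<in> S \<and> gdist W E v s = enat c \<and>
     (\<forall>t\<in>S. \<forall>b. gdist W E v t = enat b \<longrightarrow> real c + l s \<le> real b + l t)"

lemma vcenter_eqI:
  assumes inj: "inj_on l S" and weights: "\<forall>s\<in>S. 0 \<le> l s \<and> l s \<le> 1/2"
    and vc: "is_vcenter W E S l v s c"
  shows "vcenter W E S l v = s"
  unfolding vcenter_def
proof (rule the_equality)
  have s: "s \<in> S" "gdist W E v s = enat c" using vc by (auto simp: is_vcenter_def)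
  show "s \<in> S \<and> (\<forall>t\<in>S. ereal_of_enat (gdist W E v s) + ereal (l s)
                          \<le> ereal_of_enat (gdist W E v t) + ereal (l t))"
  proof (intro conjI ballI)
    fix t assume t: "t \<in> S"
    show "ereal_of_enat (gdist W E v s) + ereal (l s) \<le> ereal_of_enat (gdist W E v t) + ereal (l t)"
      using vc t s by (cases "gdist W E v t") (auto simp: is_vcenter_def)
  qed (rule s)
next
  fix s' assume s': "s' \<in> S \<and> (\<forall>t\<in>S. ereal_of_enat (gdist W E v s') + ereal (l s')
                                    \<le> ereal_of_enat (gdist W E v t) + ereal (l t))"
  have s: "s \<in> S" "gdist W E v s = enat c" using vc by (auto simp: is_vcenter_def)
  have "ereal_of_enat (gdist W E v s') + ereal (l s') \<le> ereal (real c) + ereal (l s)"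
    using s s' by auto
  then obtain b where b: "gdist W E v s' = enat b" and le: "real b + l s' \<le> real c + l s"
    by (cases "gdist W E v s'") auto
  have ge: "real c + l s \<le> real b + l s'" using vc s' b by (auto simp: is_vcenter_def)
  have "b = c"
    using le_of_weighted_le[OF le] le_of_weighted_le[OF ge] weights s s' by auto
  then have "l s' = l s" using le ge by simp
  then show "s' = s" using inj s s' by (auto dest: inj_onD)
qed

lemma vcenter_site:
  assumes inj: "inj_on l S" and weights: "\<forall>s\<in>S. 0 \<le> l s \<and> l s \<le> 1/2"
    and s: "s \<in> S" "s \<in> W"
  shows "vcenter W E S l s = s"
proof (rule vcenter_eqI[OF inj weights])
  show "is_vcenter W E S l s s 0" unfolding is_vcenter_def
  proof (intro conjI ballI allI impI s(1))
    show "gdist W E s s = enat 0" using gdist_refl[OF s(2)] by (simp add: zero_enat_def)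
    fix t b assume t: "t \<in> S" "gdist W E s t = enat b"
    show "real 0 + l s \<le> real b + l t"
    proof (cases "b = 0")
      case True
      then have "t = s" using t(2) gdist_eq_0_iff by (metis zero_enat_def)
      then show ?thesis using True by simp
    next
      case False
      then show ?thesis using weighted_le_of_less weights s(1) t(1) by blast
    qed
  qed
qed

lemma vcenter_exists:
  assumes inj: "inj_on l S" and weights: "\<forall>s\<in>S. 0 \<le> l s \<and> l s \<le> 1/2"
    and lf: "locally_finite W E" and near: "\<exists>t\<in>S. gdist W E v t \<le> enat n"
  shows "\<exists>c\<le>n. is_vcenter W E S l v (vcenter W E S l v) c"
proof -
  obtain t where t: "t \<in> S" "gdist W E v t \<le> enat n" using near by blast
  define m where "m = (LEAST m. \<exists>s\<in>S. gdist W E v s = enat m)"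
  have "\<exists>m. \<exists>s\<in>S. gdist W E v s = enat m" using t by (metis enat_ile)
  then have m: "\<exists>s\<in>S. gdist W E v s = enat m" unfolding m_def by (rule LeastI_ex)
  have m_least: "m \<le> b" if "s \<in> S" "gdist W E v s = enat b" for s b
    unfolding m_def using that by (metis (mono_tags, lifting) Least_le)
  define C where "C = {s\<in>S. gdist W E v s = enat m}"
  have C: "finite C" "C \<noteq> {}"
    using m finite_gdist_ball[OF lf, of v m] by (auto simp: C_def elim: finite_subset[rotated])
  define s0 where "s0 = arg_min_on l C"
  have s0: "s0 \<in> S" "gdist W E v s0 = enat m" "\<And>t. t \<in> C \<Longrightarrow> l s0 \<le> l t"
    using arg_min_if_finite(1)[OF C] arg_min_least[OF C] unfolding s0_def C_def by auto
  have "is_vcenter W E S l v s0 m" unfolding is_vcenter_def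
  proof (intro conjI ballI allI impI s0(1,2))
    fix t b assume t: "t \<in> S" "gdist W E v t = enat b"
    show "real m + l s0 \<le> real b + l t"
    proof (cases "b = m")
      case True
      then show ?thesis using s0(3) t by (simp add: C_def)
    next
      case False
      then have "m < b" using m_least[OF t] by simp
      then show ?thesis using weighted_le_of_less weights s0(1) t(1) by blast
    qed
  qed
  moreover have "m \<le> n" using t m_least by (cases "gdist W E v t") force+
  ultimately show ?thesis using vcenter_eqI[OF inj weights] by metis
qed

lemma is_vcenter_closer:
  assumes vc: "is_vcenter W E S l v s a"
    and w: "gdist W E v w \<le> enat i" "gdist W E w s = enat c" "i + c \<le> a"
  shows "is_vcenter W E S l w s c"
  unfolding is_vcenter_def
proof (intro conjI ballI allI impI w(2))
  show "s \<in> S" using vc by (simp add: is_vcenter_def)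
  fix t b' assume t: "t \<in> S" "gdist W E w t = enat b'"
  have "gdist W E v t \<le> gdist W E v w + gdist W E w t" by (rule gdist_triangle)
  also have "\<dots> \<le> enat (i + b')" using w(1) t(2) by (cases "gdist W E v w") auto
  finally obtain b where b: "gdist W E v t = enat b" "b \<le> i + b'"
    by (cases "gdist W E v t") auto
  have "real a + l s \<le> real b + l t" using vc t(1) b(1) by (auto simp: is_vcenter_def)
  then show "real c + l s \<le> real b' + l t" using b(2) w(3) by linarith
qed

lemma reachable_vcenter_cell:
  assumes inj: "inj_on l S" and weights: "\<forall>s\<in>S. 0 \<le> l s \<and> l s \<le> 1/2"
    and vc: "is_vcenter W E S l v s a"
  shows "reachable {w\<in>W. vcenter W E S l w = s} E v s"
proof -
  obtain xs where xs: "walk W E xs" "hd xs = v" "last xs = s" "length xs = Suc a"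
    using vc by (auto simp: is_vcenter_def elim: gdist_enatE)
  have "xs ! i \<in> {w\<in>W. vcenter W E S l w = s}" if i: "i < length xs" for i
  proof -
    obtain c where c: "gdist W E (xs ! i) s = enat c" "c \<le> a - i"
      using gdist_nth_last_le[OF xs(1) i] xs by (cases "gdist W E (xs ! i) s") auto
    have "is_vcenter W E S l (xs ! i) s c"
      using is_vcenter_closer[OF vc _ c(1)] gdist_hd_nth_le[OF xs(1) i] xs(2,4) i c(2) by simp
    then show ?thesis using vcenter_eqI[OF inj weights] xs(1) i by (auto simp: walk_def)
  qed
  then have "walk {w\<in>W. vcenter W E S l w = s} E xs"
    using xs(1) by (auto simp: walk_def in_set_conv_nth)
  then show ?thesis unfolding reachable_def using xs(2,3) by blast
qed

lemma vcenter_eq_if_close: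
  assumes sym: "symp E"
    and inj: "inj_on l S" and weights: "\<forall>s\<in>S. 0 \<le> l s \<and> l s \<le> 1/2"
    and s: "s \<in> S" and sep: "\<forall>t\<in>S. t \<noteq> s \<longrightarrow> enat R < gdist W E s t"
    and close: "gdist W E v s = enat c" "2 * c \<le> R"
  shows "vcenter W E S l v = s"
proof (rule vcenter_eqI[OF inj weights])
  show "is_vcenter W E S l v s c" unfolding is_vcenter_def
  proof (intro conjI ballI allI impI s close(1))
    fix t b assume t: "t \<in> S" "gdist W E v t = enat b"
    show "real c + l s \<le> real b + l t"
    proof (cases "t = s")
      case False
      have "enat R < gdist W E s t" using sep t(1) False by blast
      also have "\<dots> \<le> gdist W E s v + gdist W E v t" by (rule gdist_triangle)
      also have "\<dots> = enat (c + b)" using close(1) t(2) gdist_sym[OF sym] by simp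
      finally have "c < b" using close(2) by simp
      then show ?thesis using weighted_le_of_less weights s t(1) by blast
    qed (use close(1) t(2) in simp)
  qed
qed

lemma symp_cell_graph: "symp E \<Longrightarrow> symp (cell_graph W E f S)"
  by (auto simp: cell_graph_def symp_def)

lemma gdist_cell_graph_edge_le:
  assumes uv: "u \<in> W" "v \<in> W" "E u v" and f: "f ` W \<subseteq> S"
  shows "gdist S (cell_graph W E f S) (f u) (f v) \<le> 1"
proof (cases "f u = f v")
  case True
  then show ?thesis using gdist_refl[of "f u" S] f uv(1) by auto
next
  case False
  then show ?thesis using f uv by (intro gdist_edge_le) (auto simp: cell_graph_def)
qed

lemma gdist_cell_graph_le:
  assumes f: "f ` W \<subseteq> S"
  shows "gdist S (cell_graph W E f S) (f u) (f v) \<le> gdist W E u v"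
proof (cases "gdist W E u v")
  case (enat k)
  let ?\<Gamma> = "cell_graph W E f S"
  have "gdist S ?\<Gamma> (f (hd xs)) (f (last xs)) \<le> enat (length xs - 1)" if "walk W E xs" for xs
    using that
  proof (induction xs)
    case (Cons x xs)
    show ?case
    proof (cases "xs = []")
      case True
      then show ?thesis using Cons.prems f gdist_refl[of "f x" S ?\<Gamma>] by (auto simp: zero_enat_def)
    next
      case False
      then have xs: "walk W E xs" "E x (hd xs)" "x \<in> W" "hd xs \<in> W"
        using Cons.prems by (auto simp: walk_Cons walk_def[of _ _ xs])
      have "gdist S ?\<Gamma> (f x) (f (last xs))
            \<le> gdist S ?\<Gamma> (f x) (f (hd xs)) + gdist S ?\<Gamma> (f (hd xs)) (f (last xs))"
        by (rule gdist_triangle)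
      also have "\<dots> \<le> 1 + enat (length xs - 1)"
        using gdist_cell_graph_edge_le[where E=E, OF xs(3,4,2) f] Cons.IH[OF xs(1)] by (rule add_mono)
      also have "\<dots> = enat (length (x # xs) - 1)" using False by (cases xs) (auto simp: one_enat_def)
      finally show ?thesis using False by simp
    qed
  qed simp
  moreover obtain xs where "walk W E xs" "hd xs = u" "last xs = v" "length xs = Suc k"
    using enat by (rule gdist_enatE)
  ultimately show ?thesis using enat by fastforce
qed simp

lemma locally_finite_cell_graph:
  assumes sym: "symp E" and lf: "locally_finite W E"
    and radius: "\<forall>u\<in>W. gdist W E u (f u) \<le> enat r"
  shows "locally_finite S (cell_graph W E f S)"
  unfolding locally_finite_def
proof
  fix s assume "s \<in> S"
  let ?B = "{u. gdist W E s u \<le> enat r} \<inter> W"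
  have "{u. cell_graph W E f S s u} \<subseteq> f ` (\<Union>a\<in>?B. {b. E a b})"
  proof
    fix u assume "u \<in> {u. cell_graph W E f S s u}"
    then obtain a b where ab: "a \<in> W" "E a b" "f a = s" "f b = u"
      unfolding cell_graph_def by blast
    have "gdist W E s a = gdist W E a (f a)" using ab(3) gdist_sym[OF sym] by simp
    then have "a \<in> ?B" using radius ab(1) by simp
    then show "u \<in> f ` (\<Union>a\<in>?B. {b. E a b})" using ab by blast
  qed
  moreover have "finite (f ` (\<Union>a\<in>?B. {b. E a b}))"
    using finite_gdist_ball[OF lf] lf by (auto simp: locally_finite_def)
  ultimately show "finite {u. cell_graph W E f S s u}" by (rule finite_subset)
qed

lemma reachable_lift_cell_graph:
  assumes sym: "symp E" and S: "S \<subseteq> W" "\<forall>s\<in>S. f s = s"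
    and cells: "\<forall>v\<in>W. reachable {w\<in>W. f w = f v} E v (f v)"
    and ys: "walk {y\<in>S. P y} (cell_graph W E f S) ys"
  shows "reachable {v\<in>W. P (f v)} E (hd ys) (last ys)"
  using ys
proof (induction ys)
  case (Cons y ys)
  let ?U = "{v\<in>W. P (f v)}"
  have y: "y \<in> S" "P y" using Cons.prems by (auto simp: walk_Cons)
  have cell_in_U: "{w\<in>W. f w = f v} \<subseteq> ?U" if "P (f v)" for v using that by auto
  show ?case
  proof (cases "ys = []")
    case True
    then show ?thesis using y S by (auto intro: reachable_refl)
  next
    case False
    then have ys: "walk {y\<in>S. P y} (cell_graph W E f S) ys" "cell_graph W E f S y (hd ys)"
      using Cons.prems by (auto simp: walk_Cons)
    have "P (hd ys)" using ys(1) hd_in_set[OF False] unfolding walk_def by blast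
    \<comment> \<open>an edge of the cell graph is crossed by walking inside the two cells\<close>
    obtain a b where ab: "a \<in> W" "b \<in> W" "E a b" "f a = y" "f b = hd ys"
      using ys(2) unfolding cell_graph_def by blast
    have "reachable {w\<in>W. f w = f a} E a (f a)" using cells ab(1) by blast
    then have "reachable ?U E a y" using reachable_mono[OF _ cell_in_U[of a]] ab(4) y(2) by simp
    then have r1: "reachable ?U E y a" by (rule reachable_sym[OF sym])
    have r2: "reachable ?U E a b" using ab y \<open>P (hd ys)\<close> by (intro reachable_edge) auto
    have "reachable {w\<in>W. f w = f b} E b (f b)" using cells ab(2) by blast
    then have r3: "reachable ?U E b (hd ys)"
      using reachable_mono[OF _ cell_in_U[of b]] ab(5) \<open>P (hd ys)\<close> by simp
    have "reachable ?U E y (last ys)"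
      using reachable_trans[OF reachable_trans[OF reachable_trans[OF r1 r2] r3] Cons.IH[OF ys(1)]] .
    then show ?thesis using False by simp
  qed
qed simp

lemma induced_connected_two_level_cell:
  assumes sym: "symp E" and S: "S \<subseteq> W" "\<forall>s\<in>S. f s = s"
    and f_cells: "\<forall>v\<in>W. reachable {w\<in>W. f w = f v} E v (f v)"
    and g_cells: "\<forall>y\<in>S. reachable {x\<in>S. g x = g y} (cell_graph W E f S) y (g y)"
    and f_range: "f ` W \<subseteq> S" and s: "s \<in> S" "g s = s"
  shows "induced_connected E {v\<in>W. g (f v) = s}"
proof -
  let ?U = "{v\<in>W. g (f v) = s}"
  have to_s: "reachable ?U E u s" if u: "u \<in> W" "g (f u) = s" for u
  proof -
    have "reachable {w\<in>W. f w = f u} E u (f u)" using f_cells u(1) by blast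
    then have "reachable ?U E u (f u)" by (rule reachable_mono) (use u(2) in auto)
    moreover obtain ys where "walk {x\<in>S. g x = s} (cell_graph W E f S) ys" "hd ys = f u" "last ys = s"
      using g_cells f_range u unfolding reachable_def by fastforce
    then have "reachable ?U E (f u) s"
      using reachable_lift_cell_graph[where P="\<lambda>x. g x = s", OF sym S f_cells] by metis
    ultimately show ?thesis by (rule reachable_trans)
  qed
  have "s \<in> ?U" using s S by auto
  moreover have "reachable ?U E u v" if "u \<in> ?U" "v \<in> ?U" for u v
    using reachable_trans[OF to_s reachable_sym[OF sym to_s]] that by auto
  ultimately show ?thesis
    unfolding induced_connected_def reachable_def[symmetric] by blast
qed

lemma vcenter_cell_graph_eq_if_close:
  assumes f: "f ` W \<subseteq> S" "\<forall>x\<in>S. f x = x" and sym: "symp E"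
    and inj: "inj_on l T" and weights: "\<forall>t\<in>T. 0 \<le> l t \<and> l t \<le> 1/2"
    and s: "s \<in> T" "T \<subseteq> S"
    and sep: "\<forall>t\<in>T. t \<noteq> s \<longrightarrow> enat R < gdist S (cell_graph W E f S) s t"
    and close: "gdist W E v s = enat k" "2 * k \<le> R"
  shows "vcenter S (cell_graph W E f S) T l (f v) = s"
proof -
  have "gdist S (cell_graph W E f S) (f v) s \<le> enat k"
    using gdist_cell_graph_le[OF f(1), of E v s] f(2) s close(1) by auto
  then obtain c where "gdist S (cell_graph W E f S) (f v) s = enat c" "c \<le> k"
    by (cases "gdist S (cell_graph W E f S) (f v) s") auto
  then show ?thesis
    using vcenter_eq_if_close[OF symp_cell_graph[OF sym] inj weights s(1) sep] close(2) by simp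
qed

theorem claim5p4:
  fixes V :: "'a set" and E :: "'a \<Rightarrow> 'a \<Rightarrow> bool"
    and h R :: nat and S1 S2 :: "'a set" and l1 l2 :: "'a \<Rightarrow> real"
  assumes G: "simple_graph V E" and lf: "locally_finite V E"
    and h: "even h" "h > 0" and R: "R > 0"
    and S1: "S1 \<subseteq> V"
    and S1_sep: "\<forall>s\<in>S1. \<forall>t\<in>S1. s \<noteq> t \<longrightarrow> gdist V E s t > enat h"
    and S1_cov: "\<forall>v\<in>V. \<exists>s\<in>S1. gdist V E v s \<le> enat h"
    and l1: "inj_on l1 S1" "\<forall>s\<in>S1. 0 \<le> l1 s \<and> l1 s \<le> 1/2"
    and S2: "S2 \<subseteq> S1"
    and S2_sep: "\<forall>s\<in>S2. \<forall>t\<in>S2. s \<noteq> t \<longrightarrow>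
        gdist S1 (cell_graph V E (vcenter V E S1 l1) S1) s t > enat R"
    and S2_cov: "\<forall>s\<in>S1. \<exists>t\<in>S2.
        gdist S1 (cell_graph V E (vcenter V E S1 l1) S1) s t \<le> enat R"
    and l2: "inj_on l2 S2" "\<forall>s\<in>S2. 0 \<le> l2 s \<and> l2 s \<le> 1/2"
  shows "\<forall>s\<in>S2.
     induced_connected E
       {v\<in>V. vcenter S1 (cell_graph V E (vcenter V E S1 l1) S1) S2 l2 (vcenter V E S1 l1 v) = s}
   \<and> (\<forall>v\<in>V. \<forall>k::nat. gdist V E v s = enat k \<and> int k \<le> int (R div 2) - int h \<longrightarrow>
        vcenter S1 (cell_graph V E (vcenter V E S1 l1) S1) S2 l2 (vcenter V E S1 l1 v) = s)"
proof -
  define V1 where "V1 = vcenter V E S1 l1"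
  define V2 where "V2 = vcenter S1 (cell_graph V E V1 S1) S2 l2"
  have sym: "symp E" using G by (auto simp: simple_graph_def symp_def)
  have V1: "\<exists>c\<le>h. is_vcenter V E S1 l1 v (V1 v) c" if "v \<in> V" for v
    using vcenter_exists[OF l1 lf] S1_cov that unfolding V1_def by blast
  then have V1_range: "V1 ` V \<subseteq> S1" by (auto simp: is_vcenter_def)
  have V1_fix: "\<forall>s\<in>S1. V1 s = s" using vcenter_site[OF l1] S1 unfolding V1_def by blast
  have "\<forall>v\<in>V. gdist V E v (V1 v) \<le> enat h" using V1 by (force simp: is_vcenter_def)
  then have lf_cell_graph: "locally_finite S1 (cell_graph V E V1 S1)"
    by (rule locally_finite_cell_graph[OF sym lf])
  have V2: "\<exists>c. is_vcenter S1 (cell_graph V E V1 S1) S2 l2 x (V2 x) c" if "x \<in> S1" for x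
    using vcenter_exists[OF l2 lf_cell_graph] S2_cov that unfolding V1_def V2_def by blast
  have V2_fix: "\<forall>s\<in>S2. V2 s = s" using vcenter_site[OF l2] S2 unfolding V2_def by blast
  have "induced_connected E {v\<in>V. V2 (V1 v) = s}" if "s \<in> S2" for s
  proof (rule induced_connected_two_level_cell[OF sym S1 V1_fix _ _ V1_range])
    show "\<forall>v\<in>V. reachable {w\<in>V. V1 w = V1 v} E v (V1 v)"
      using V1 reachable_vcenter_cell[OF l1] unfolding V1_def by blast
    show "\<forall>y\<in>S1. reachable {x\<in>S1. V2 x = V2 y} (cell_graph V E V1 S1) y (V2 y)"
      using V2 reachable_vcenter_cell[OF l2] unfolding V2_def by blast
    show "s \<in> S1" "V2 s = s" using that S2 V2_fix by auto
  qed
  moreover have "V2 (V1 v) = s"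
    if "s \<in> S2" "gdist V E v s = enat k" "int k \<le> int (R div 2) - int h" for s v k
    using vcenter_cell_graph_eq_if_close[OF V1_range V1_fix sym l2 that(1) S2, of R v k]
      S2_sep that unfolding V2_def V1_def by fastforce
  ultimately show ?thesis unfolding V2_def V1_def by blast
qed

end
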